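(* Assume the setting and the CRAIG recurrence described in the context, and let $\ell$ be the index at which the recurrence stops, i.e. $\beta_2,\dots,\beta_\ell>0$ and $\beta_{\ell+1}=0$ (with $\ell\le n$). Then for every $1\le k\le \ell$, $$\|u_*-u^{(k)}\|_M^2+(p_*-p^{(k)})^TC(p_*-p^{(k)})=\|p_*-p^{(k)}\|_S^2=\sum_{i=k+1}^{\ell}\zeta_i^2,$$ where $\|x\|_S=(x^TSx)^{1/2}$. In particular $\|u_*-u^{(k)}\|_M^2\le\sum_{i=k+1}^{\ell}\zeta_i^2$, and the sequence $\|p_*-p^{(k)}\|_S$, $k=1,\dots,\ell$, is strictly decreasing.
   Context: Setting: $M\in\mathbb{R}^{m\times m}$ is symmetric positive definite, $A\in\mathbb{R}^{m\times n}$ ($n\le m$) has full column rank, $C\in\mathbb{R}^{n\times n}$ is symmetric positive semidefinite, $b\in\mathbb{R}^n$ is nonzero, and $N\in\mathbb{R}^{n\times n}$ is symmetric positive definite (the preconditioner). For a symmetric positive definite $G$ write $\|x\|_G=(x^TGx)^{1/2}$. The generalized saddle point system is $Mu+Ap=0$, $A^Tu-Cp=b$, with unique solution $(u_*,p_* )$; $S=A^TM^{-1}A+C$. CRAIG recurrence (exact arithmetic): Initialization: $\beta_1=\|b\|_{N^{-1}}$, $q_1=N^{-1}b/\beta_1$, $r_1=q_1$, $w_1=M^{-1}Aq_1$, $s_1=Cr_1$, $\alpha_1=(w_1^TMw_1+r_1^Ts_1)^{1/2}$, $v_1=w_1/\alpha_1$, $t_1=s_1/\alpha_1$, $\zeta_1=\beta_1/\alpha_1$,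 $u^{(1)}=\zeta_1v_1$, $p^{(1)}=-(\zeta_1/\alpha_1)r_1$. For $k=1,2,\dots$: $g_k=N^{-1}(A^Tv_k+t_k)-\alpha_kq_k$, $\beta_{k+1}=\|g_k\|_N$; if $\beta_{k+1}=0$ the recurrence stops; otherwise $q_{k+1}=g_k/\beta_{k+1}$, $w_{k+1}=M^{-1}Aq_{k+1}-\beta_{k+1}v_k$, $r_{k+1}=q_{k+1}-(\beta_{k+1}/\alpha_k)r_k$, $s_{k+1}=Cr_{k+1}$, $\alpha_{k+1}=(w_{k+1}^TMw_{k+1}+r_{k+1}^Ts_{k+1})^{1/2}$, $v_{k+1}=w_{k+1}/\alpha_{k+1}$, $t_{k+1}=s_{k+1}/\alpha_{k+1}$, $\zeta_{k+1}=-(\beta_{k+1}/\alpha_{k+1})\zeta_k$, $u^{(k+1)}=u^{(k)}+\zeta_{k+1}v_{k+1}$, $p^{(k+1)}=p^{(k)}-(\zeta_{k+1}/\alpha_{k+1})r_{k+1}$. *)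

theory Defs
  imports "HOL-Analysis.Analysis"
begin

definition qnorm :: "real^'k^'k \<Rightarrow> real^'k \<Rightarrow> real" where
  "qnorm G x = sqrt (x \<bullet> (G *v x))"

definition sym_pos_def_mat :: "real^'k^'k \<Rightarrow> bool" where
  "sym_pos_def_mat G \<longleftrightarrow> transpose G = G \<and> (\<forall>x. x \<noteq> 0 \<longrightarrow> x \<bullet> (G *v x) > 0)"

definition sym_pos_semidef_mat :: "real^'k^'k \<Rightarrow> bool" where
  "sym_pos_semidef_mat G \<longleftrightarrow> transpose G = G \<and> (\<forall>x. x \<bullet> (G *v x) \<ge> 0)"

record ('m, 'n) craig_state =
  cq :: "real^'n"
  cr :: "real^'n"
  cv :: "real^'m"
  ct :: "real^'n"
  calpha :: real
  cbeta :: real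
  czeta :: real
  cu :: "real^'m"
  cp :: "real^'n"

definition craig_init ::
  "real^'m^'m \<Rightarrow> real^'n^'m \<Rightarrow> real^'n^'n \<Rightarrow> real^'n^'n \<Rightarrow> real^'n \<Rightarrow> ('m,'n) craig_state" where
  "craig_init M A C N b =
    (let \<beta> = sqrt (b \<bullet> (matrix_inv N *v b));
         q = (1 / \<beta>) *\<^sub>R (matrix_inv N *v b);
         r = q;
         w = matrix_inv M *v (A *v q);
         s = C *v r;
         \<alpha> = sqrt (w \<bullet> (M *v w) + r \<bullet> s);
         v = (1 / \<alpha>) *\<^sub>R w;
         t = (1 / \<alpha>) *\<^sub>R s;
         \<zeta> = \<beta> / \<alpha>
     in \<lparr> cq = q, cr = r, cv = v, ct = t, calpha = \<alpha>, cbeta = \<beta>, czeta = \<zeta>,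
          cu = \<zeta> *\<^sub>R v, cp = - ((\<zeta> / \<alpha>) *\<^sub>R r) \<rparr>)"

definition craig_step ::
  "real^'m^'m \<Rightarrow> real^'n^'m \<Rightarrow> real^'n^'n \<Rightarrow> real^'n^'n \<Rightarrow> ('m,'n) craig_state \<Rightarrow> ('m,'n) craig_state" where
  "craig_step M A C N st =
    (let g = matrix_inv N *v (transpose A *v cv st + ct st) - calpha st *\<^sub>R cq st;
         \<beta> = sqrt (g \<bullet> (N *v g));
         q = (1 / \<beta>) *\<^sub>R g;
         w = matrix_inv M *v (A *v q) - \<beta> *\<^sub>R cv st;
         r = q - (\<beta> / calpha st) *\<^sub>R cr st;
         s = C *v r;
         \<alpha> = sqrt (w \<bullet> (M *v w) + r \<bullet> s);
         v = (1 / \<alpha>) *\<^sub>R w;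
         t = (1 / \<alpha>) *\<^sub>R s;
         \<zeta> = - (\<beta> / \<alpha>) * czeta st
     in \<lparr> cq = q, cr = r, cv = v, ct = t, calpha = \<alpha>, cbeta = \<beta>, czeta = \<zeta>,
          cu = cu st + \<zeta> *\<^sub>R v, cp = cp st - (\<zeta> / \<alpha>) *\<^sub>R r \<rparr>)"

text \<open>craig_seq ... j is the state with index k = j + 1.\<close>
primrec craig_seq ::
  "real^'m^'m \<Rightarrow> real^'n^'m \<Rightarrow> real^'n^'n \<Rightarrow> real^'n^'n \<Rightarrow> real^'n \<Rightarrow> nat \<Rightarrow> ('m,'n) craig_state" where
  "craig_seq M A C N b 0 = craig_init M A C N b"
| "craig_seq M A C N b (Suc j) = craig_step M A C N (craig_seq M A C N b j)"

definition craig_beta where "craig_beta M A C N b k = cbeta (craig_seq M A C N b (k - 1))"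
definition craig_zeta where "craig_zeta M A C N b k = czeta (craig_seq M A C N b (k - 1))"
definition craig_u where "craig_u M A C N b k = cu (craig_seq M A C N b (k - 1))"
definition craig_p where "craig_p M A C N b k = cp (craig_seq M A C N b (k - 1))"

end

theory Submission
  imports Defs
begin

text \<open>Put \<open>d_k = r_k / alpha_k\<close> and \<open>S = A^T M^-1 A + C\<close>. The recurrences are a
  Golub-Kahan bidiagonalization of \<open>S\<close> in the \<open>N\<close>-inner product,
  \<open>S d_k = N (beta_(k+1) q_(k+1) + alpha_k q_k)\<close>, and by a joint induction the \<open>q_k\<close> are
  \<open>N\<close>-orthonormal and the \<open>d_k\<close> are \<open>S\<close>-orthonormal as long as the \<open>beta_k\<close> are positive.
  The residual \<open>S (p_* - p^(k))\<close> equals \<open>zeta_k beta_(k+1) N q_(k+1)\<close>, so it vanishes at the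
  stopping index and \<open>p^(l) = p_*\<close>. Since \<open>p^(k+1) = p^(k) - zeta_(k+1) d_(k+1)\<close>, the error
  \<open>p_* - p^(k)\<close> is \<open>- sum_(i>k) zeta_i d_i\<close>, whose squared \<open>S\<close>-norm is \<open>sum_(i>k) zeta_i^2\<close>.
  Finally \<open>u^(k) = - M^-1 A p^(k)\<close> and likewise for \<open>u_*\<close>, so the squared \<open>M\<close>-norm of the
  \<open>u\<close>-error plus the \<open>C\<close>-seminorm of the \<open>p\<close>-error is the squared \<open>S\<close>-norm of the latter.\<close>

lemma inner_matrix_vector_commute:
  fixes G :: "real^'k^'k"
  assumes "transpose G = G"
  shows "x \<bullet> (G *v y) = y \<bullet> (G *v x)"
proof -
  have "x \<bullet> (G *v y) = (x v* G) \<bullet> y" by (simp add: dot_lmul_matrix)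
  also have "x v* G = G *v x" by (metis assms transpose_matrix_vector)
  finally show ?thesis by (simp add: inner_commute)
qed

lemma symmetric_if_inner_matrix_vector_commute:
  fixes G :: "real^'k^'k"
  assumes commute: "\<And>x y. x \<bullet> (G *v y) = y \<bullet> (G *v x)"
  shows "transpose G = G"
proof -
  have "x \<bullet> (transpose G *v y) = x \<bullet> (G *v y)" for x y
  proof -
    have "x \<bullet> (transpose G *v y) = (y v* G) \<bullet> x"
      by (simp only: transpose_matrix_vector inner_commute)
    also have "\<dots> = x \<bullet> (G *v y)"
      by (simp only: dot_lmul_matrix commute)
    finally show ?thesis .
  qed
  then show ?thesis by (metis matrix_eq vector_eq_ldot)
qed

lemma sym_pos_def_imp_semidef: "sym_pos_def_mat G \<Longrightarrow> sym_pos_semidef_mat G"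
  unfolding sym_pos_def_mat_def sym_pos_semidef_mat_def
  by (metis inner_zero_left order.strict_implies_order order_refl)

lemma sym_pos_def_mat_inner_eq_0:
  "sym_pos_def_mat G \<Longrightarrow> x \<bullet> (G *v x) = 0 \<longleftrightarrow> x = 0"
  unfolding sym_pos_def_mat_def by fastforce

lemma qnorm_power2:
  "sym_pos_semidef_mat G \<Longrightarrow> (qnorm G x)\<^sup>2 = x \<bullet> (G *v x)"
  unfolding qnorm_def sym_pos_semidef_mat_def by simp

lemma sym_pos_def_mat_inverse:
  fixes G :: "real^'k^'k"
  assumes "sym_pos_def_mat G"
  shows "G *v (matrix_inv G *v x) = x" "matrix_inv G *v (G *v x) = x"
proof -
  have "inj ((*v) G)"
  proof (rule injI)
    fix x y assume "G *v x = G *v y"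
    then have "(x - y) \<bullet> (G *v (x - y)) = 0"
      by (simp add: matrix_vector_mult_diff_distrib)
    then show "x = y" using sym_pos_def_mat_inner_eq_0[OF assms] by simp
  qed
  then have "invertible G"
    by (simp add: invertible_left_inverse matrix_left_invertible_injective)
  then have "G ** matrix_inv G = mat 1 \<and> matrix_inv G ** G = mat 1"
    unfolding invertible_def matrix_inv_def by (rule someI_ex)
  then show "G *v (matrix_inv G *v x) = x" "matrix_inv G *v (G *v x) = x"
    by (simp_all add: matrix_vector_mul_assoc)
qed

lemma sym_pos_def_mat_matrix_inv:
  fixes G :: "real^'k^'k"
  assumes G: "sym_pos_def_mat G"
  shows "sym_pos_def_mat (matrix_inv G)"
  unfolding sym_pos_def_mat_def
proof
  have "transpose G = G" using G sym_pos_def_mat_def by blast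
  from inner_matrix_vector_commute[OF this, of "matrix_inv G *v x" "matrix_inv G *v y" for x y]
  show "transpose (matrix_inv G) = matrix_inv G"
    by (intro symmetric_if_inner_matrix_vector_commute)
      (simp add: sym_pos_def_mat_inverse[OF G] inner_commute)
  show "\<forall>x. x \<noteq> 0 \<longrightarrow> x \<bullet> (matrix_inv G *v x) > 0"
  proof (intro allI impI)
    fix x :: "real^'k" assume "x \<noteq> 0"
    then have "matrix_inv G *v x \<noteq> 0"
      using sym_pos_def_mat_inverse(1)[OF G, of x] by auto
    then have "(matrix_inv G *v x) \<bullet> (G *v (matrix_inv G *v x)) > 0"
      using G sym_pos_def_mat_def by blast
    then show "x \<bullet> (matrix_inv G *v x) > 0"
      by (simp add: sym_pos_def_mat_inverse[OF G] inner_commute)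
  qed
qed

lemma schur_complement_mult:
  "(transpose A ** matrix_inv M ** A + C) *v x = transpose A *v (matrix_inv M *v (A *v x)) + C *v x"
  by (simp add: matrix_vector_mult_add_rdistrib matrix_vector_mul_assoc matrix_mul_assoc)

lemma inner_schur_complement_mult:
  fixes M :: "real^'m^'m" and A :: "real^'n^'m"
  shows "x \<bullet> ((transpose A ** matrix_inv M ** A + C) *v y)
    = (A *v x) \<bullet> (matrix_inv M *v (A *v y)) + x \<bullet> (C *v y)"
proof -
  have "x \<bullet> (transpose A *v z) = (A *v x) \<bullet> z" for z
    by (metis dot_lmul_matrix inner_commute transpose_matrix_vector)
  then show ?thesis by (simp only: schur_complement_mult inner_add_right)
qed

lemma sym_pos_def_mat_schur_complement:
  fixes M :: "real^'m^'m" and A :: "real^'n^'m"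
  assumes M: "sym_pos_def_mat M" and A: "inj ((*v) A)" and C: "sym_pos_semidef_mat C"
  shows "sym_pos_def_mat (transpose A ** matrix_inv M ** A + C)"
  unfolding sym_pos_def_mat_def
proof
  have "transpose (matrix_inv M) = matrix_inv M" "transpose C = C"
    using sym_pos_def_mat_matrix_inv[OF M] C
    unfolding sym_pos_def_mat_def sym_pos_semidef_mat_def by blast+
  then show "transpose (transpose A ** matrix_inv M ** A + C) = transpose A ** matrix_inv M ** A + C"
    by (intro symmetric_if_inner_matrix_vector_commute)
      (simp add: inner_schur_complement_mult inner_matrix_vector_commute[of "matrix_inv M"]
        inner_matrix_vector_commute[of C])
  show "\<forall>x. x \<noteq> 0 \<longrightarrow> x \<bullet> ((transpose A ** matrix_inv M ** A + C) *v x) > 0"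
  proof (intro allI impI)
    fix x :: "real^'n" assume "x \<noteq> 0"
    then have "A *v x \<noteq> 0" using A by (metis injD matrix_vector_mult_0_right)
    then have "(A *v x) \<bullet> (matrix_inv M *v (A *v x)) > 0"
      using sym_pos_def_mat_matrix_inv[OF M] sym_pos_def_mat_def by blast
    moreover have "x \<bullet> (C *v x) \<ge> 0" using C sym_pos_semidef_mat_def by blast
    ultimately show "x \<bullet> ((transpose A ** matrix_inv M ** A + C) *v x) > 0"
      by (simp add: inner_schur_complement_mult)
  qed
qed

lemma qnorm_schur_complement_split:
  fixes M :: "real^'m^'m" and A :: "real^'n^'m"
  assumes M: "sym_pos_def_mat M"
  shows "(qnorm M (matrix_inv M *v (A *v e)))\<^sup>2 + e \<bullet> (C *v e)
    = e \<bullet> ((transpose A ** matrix_inv M ** A + C) *v e)"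
  by (simp add: qnorm_power2[OF sym_pos_def_imp_semidef[OF M]] inner_schur_complement_mult
      sym_pos_def_mat_inverse[OF M] inner_commute)

definition orthonormal_upto :: "real^'k^'k \<Rightarrow> (nat \<Rightarrow> real^'k) \<Rightarrow> nat \<Rightarrow> bool" where
  "orthonormal_upto G x n \<longleftrightarrow> (\<forall>i\<le>n. \<forall>j\<le>n. x i \<bullet> (G *v x j) = (if i = j then 1 else 0))"

lemma orthonormal_upto_0: "orthonormal_upto G x 0 \<longleftrightarrow> x 0 \<bullet> (G *v x 0) = 1"
  by (simp add: orthonormal_upto_def)

lemma orthonormal_upto_Suc:
  assumes "transpose G = G"
  shows "orthonormal_upto G x (Suc n) \<longleftrightarrow> orthonormal_upto G x n
    \<and> (\<forall>i\<le>n. x (Suc n) \<bullet> (G *v x i) = 0) \<and> x (Suc n) \<bullet> (G *v x (Suc n)) = 1"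
  unfolding orthonormal_upto_def le_Suc_eq
  using inner_matrix_vector_commute[OF assms] by (auto 4 3)

lemma orthonormal_upto_quadratic_sum:
  assumes "orthonormal_upto G x n" "I \<subseteq> {..n}"
  shows "(\<Sum>i\<in>I. c i *\<^sub>R x i) \<bullet> (G *v (\<Sum>i\<in>I. c i *\<^sub>R x i)) = (\<Sum>i\<in>I. (c i)\<^sup>2)"
proof -
  have "finite I" using assms(2) finite_subset by blast
  have orth: "x i \<bullet> (G *v x j) = (if i = j then 1 else 0)" if "i \<in> I" "j \<in> I" for i j
    using assms that unfolding orthonormal_upto_def by blast
  have "(\<Sum>i\<in>I. c i *\<^sub>R x i) \<bullet> (G *v (\<Sum>j\<in>I. c j *\<^sub>R x j))
      = (\<Sum>j\<in>I. \<Sum>i\<in>I. c i * c j * (x i \<bullet> (G *v x j)))"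
    by (simp add: vec.sum matrix_vector_mult_scaleR inner_sum_left inner_sum_right
        sum_distrib_left ac_simps)
  also have "\<dots> = (\<Sum>j\<in>I. \<Sum>i\<in>I. if i = j then c i * c j else 0)"
    by (intro sum.cong refl) (simp add: orth)
  also have "\<dots> = (\<Sum>i\<in>I. (c i)\<^sup>2)"
    by (simp add: \<open>finite I\<close> power2_eq_square)
  finally show ?thesis .
qed

locale craig =
  fixes M :: "real^'m^'m" and A :: "real^'n^'m" and C N :: "real^'n^'n" and b :: "real^'n"
  assumes M_spd: "sym_pos_def_mat M"
    and A_inj: "inj ((*v) A)"
    and C_spsd: "sym_pos_semidef_mat C"
    and b_nonzero: "b \<noteq> 0"
    and N_spd: "sym_pos_def_mat N"
begin

definition S :: "real^'n^'n" where "S = transpose A ** matrix_inv M ** A + C"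

text \<open>Indices are 0-based: \<open>q j\<close>, \<open>\<alpha> j\<close>, ... are the paper's \<open>q_(j+1)\<close>, \<open>alpha_(j+1)\<close>, ...\<close>
definition q :: "nat \<Rightarrow> real^'n" where "q j = cq (craig_seq M A C N b j)"
definition r :: "nat \<Rightarrow> real^'n" where "r j = cr (craig_seq M A C N b j)"
definition v :: "nat \<Rightarrow> real^'m" where "v j = cv (craig_seq M A C N b j)"
definition t :: "nat \<Rightarrow> real^'n" where "t j = ct (craig_seq M A C N b j)"
definition \<alpha> :: "nat \<Rightarrow> real" where "\<alpha> j = calpha (craig_seq M A C N b j)"
definition \<beta> :: "nat \<Rightarrow> real" where "\<beta> j = cbeta (craig_seq M A C N b j)"
definition \<zeta> :: "nat \<Rightarrow> real" where "\<zeta> j = czeta (craig_seq M A C N b j)"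
definition u :: "nat \<Rightarrow> real^'m" where "u j = cu (craig_seq M A C N b j)"
definition p :: "nat \<Rightarrow> real^'n" where "p j = cp (craig_seq M A C N b j)"
definition g :: "nat \<Rightarrow> real^'n" where
  "g j = matrix_inv N *v (transpose A *v v j + t j) - \<alpha> j *\<^sub>R q j"
definition d :: "nat \<Rightarrow> real^'n" where "d j = (1 / \<alpha> j) *\<^sub>R r j"

lemmas state_defs = q_def r_def v_def t_def \<alpha>_def \<beta>_def \<zeta>_def u_def p_def

lemma beta_0: "\<beta> 0 = sqrt (b \<bullet> (matrix_inv N *v b))"
  and q_0: "q 0 = (1 / \<beta> 0) *\<^sub>R (matrix_inv N *v b)"
  and r_0: "r 0 = q 0"
  and v_0: "v 0 = (1 / \<alpha> 0) *\<^sub>R (matrix_inv M *v (A *v q 0))"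
  and t_0: "t 0 = (1 / \<alpha> 0) *\<^sub>R (C *v r 0)"
  and alpha_0: "\<alpha> 0 = sqrt ((matrix_inv M *v (A *v q 0)) \<bullet> (M *v (matrix_inv M *v (A *v q 0)))
                          + r 0 \<bullet> (C *v r 0))"
  and zeta_0: "\<zeta> 0 = \<beta> 0 / \<alpha> 0"
  and u_0: "u 0 = \<zeta> 0 *\<^sub>R v 0"
  and p_0: "p 0 = - ((\<zeta> 0 / \<alpha> 0) *\<^sub>R r 0)"
  by (simp_all add: state_defs craig_init_def Let_def)

lemma beta_Suc: "\<beta> (Suc j) = sqrt (g j \<bullet> (N *v g j))"
  and q_Suc: "q (Suc j) = (1 / \<beta> (Suc j)) *\<^sub>R g j"
  and r_Suc: "r (Suc j) = q (Suc j) - (\<beta> (Suc j) / \<alpha> j) *\<^sub>R r j"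
  and v_Suc: "v (Suc j) = (1 / \<alpha> (Suc j)) *\<^sub>R (matrix_inv M *v (A *v q (Suc j)) - \<beta> (Suc j) *\<^sub>R v j)"
  and t_Suc: "t (Suc j) = (1 / \<alpha> (Suc j)) *\<^sub>R (C *v r (Suc j))"
  and alpha_Suc: "\<alpha> (Suc j) = sqrt ((matrix_inv M *v (A *v q (Suc j)) - \<beta> (Suc j) *\<^sub>R v j)
          \<bullet> (M *v (matrix_inv M *v (A *v q (Suc j)) - \<beta> (Suc j) *\<^sub>R v j)) + r (Suc j) \<bullet> (C *v r (Suc j)))"
  and zeta_Suc: "\<zeta> (Suc j) = - (\<beta> (Suc j) / \<alpha> (Suc j)) * \<zeta> j"
  and u_Suc: "u (Suc j) = u j + \<zeta> (Suc j) *\<^sub>R v (Suc j)"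
  and p_Suc: "p (Suc j) = p j - (\<zeta> (Suc j) / \<alpha> (Suc j)) *\<^sub>R r (Suc j)"
  by (simp_all add: state_defs g_def craig_step_def Let_def)

lemma S_spd: "sym_pos_def_mat S"
  unfolding S_def using M_spd A_inj C_spsd by (rule sym_pos_def_mat_schur_complement)

lemma S_mult: "S *v x = transpose A *v (matrix_inv M *v (A *v x)) + C *v x"
  by (simp only: S_def schur_complement_mult)

lemma S_sym: "transpose S = S" and N_sym: "transpose N = N"
  using S_spd N_spd sym_pos_def_mat_def by blast+

lemma r_Suc_d: "r (Suc j) = q (Suc j) - \<beta> (Suc j) *\<^sub>R d j"
  by (simp add: r_Suc d_def)

lemma v_t_eq: "v j = matrix_inv M *v (A *v d j) \<and> t j = C *v d j"
proof (induction j)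
  case 0
  show ?case by (simp add: v_0 t_0 r_0 d_def algebra_simps)
next
  case (Suc j)
  then show ?case by (simp add: v_Suc t_Suc d_def[of "Suc j"] r_Suc_d algebra_simps)
qed

lemma v_eq: "v j = matrix_inv M *v (A *v d j)" and t_eq: "t j = C *v d j"
  using v_t_eq by blast+

lemma alpha_eq: "\<alpha> j = sqrt (r j \<bullet> (S *v r j))"
proof -
  have "\<alpha> j = sqrt ((matrix_inv M *v (A *v r j)) \<bullet> (M *v (matrix_inv M *v (A *v r j)))
      + r j \<bullet> (C *v r j))"
  proof (cases j)
    case 0
    then show ?thesis by (simp add: alpha_0 r_0)
  next
    case (Suc i)
    then show ?thesis by (simp add: alpha_Suc r_Suc_d v_eq algebra_simps)
  qed
  then show ?thesis
    unfolding S_def qnorm_schur_complement_split[OF M_spd, symmetric]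
    by (simp add: qnorm_power2[OF sym_pos_def_imp_semidef[OF M_spd]])
qed

lemma S_nonneg: "x \<bullet> (S *v x) \<ge> 0"
  using sym_pos_def_imp_semidef[OF S_spd] sym_pos_semidef_mat_def by blast

lemma alpha_nonneg: "\<alpha> j \<ge> 0"
  by (simp add: alpha_eq S_nonneg)

lemma alpha_power2: "(\<alpha> j)\<^sup>2 = r j \<bullet> (S *v r j)"
  by (simp add: alpha_eq S_nonneg)

text \<open>No positivity hypothesis is needed: \<open>\<alpha> j = 0\<close> forces \<open>r j = 0\<close> because \<open>S\<close> is definite.\<close>
lemma r_eq: "r j = \<alpha> j *\<^sub>R d j"
proof (cases "\<alpha> j = 0")
  case True
  then have "r j \<bullet> (S *v r j) = 0" using alpha_power2[of j] by simp
  with True show ?thesis using sym_pos_def_mat_inner_eq_0[OF S_spd] by (simp add: d_def)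
qed (simp add: d_def)

lemma d_normalized: "\<alpha> j > 0 \<Longrightarrow> d j \<bullet> (S *v d j) = 1"
  using alpha_power2[of j, symmetric]
  by (simp add: d_def matrix_vector_mult_scaleR power2_eq_square)

lemma alpha_pos_if_d_normalized: "d j \<bullet> (S *v d j) = 1 \<Longrightarrow> \<alpha> j > 0"
  using alpha_nonneg[of j] by (cases "\<alpha> j = 0") (auto simp: d_def)

lemma d_Suc: "d (Suc j) = (1 / \<alpha> (Suc j)) *\<^sub>R (q (Suc j) - \<beta> (Suc j) *\<^sub>R d j)"
  by (simp add: d_def[of "Suc j"] r_Suc_d)

lemma d_0: "d 0 = (1 / \<alpha> 0) *\<^sub>R q 0"
  by (simp add: d_def r_0)

lemma q_Suc_d: "q (Suc j) = \<alpha> (Suc j) *\<^sub>R d (Suc j) + \<beta> (Suc j) *\<^sub>R d j"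
  using r_eq[of "Suc j"] by (simp add: r_Suc_d algebra_simps)

lemma q_0_d: "q 0 = \<alpha> 0 *\<^sub>R d 0"
  using r_eq[of 0] by (simp add: r_0)

lemma g_eq: "g j = \<beta> (Suc j) *\<^sub>R q (Suc j)"
proof (cases "\<beta> (Suc j) = 0")
  case True
  then have "g j \<bullet> (N *v g j) = 0"
    using beta_Suc[of j] sym_pos_def_imp_semidef[OF N_spd]
    by (simp add: sym_pos_semidef_mat_def)
  with True show ?thesis using sym_pos_def_mat_inner_eq_0[OF N_spd] by simp
qed (simp add: q_Suc)

lemma S_d_eq: "S *v d j = N *v (\<beta> (Suc j) *\<^sub>R q (Suc j) + \<alpha> j *\<^sub>R q j)"
proof -
  have "matrix_inv N *v (S *v d j) = \<beta> (Suc j) *\<^sub>R q (Suc j) + \<alpha> j *\<^sub>R q j"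
    using g_eq[of j] by (simp add: g_def v_eq t_eq S_mult algebra_simps)
  then show ?thesis by (metis sym_pos_def_mat_inverse(1)[OF N_spd])
qed

lemma beta_0_pos: "\<beta> 0 > 0"
  using sym_pos_def_mat_matrix_inv[OF N_spd] b_nonzero
  by (simp add: beta_0 sym_pos_def_mat_def)

lemma q_0_normalized: "q 0 \<bullet> (N *v q 0) = 1"
proof -
  have "(matrix_inv N *v b) \<bullet> (N *v (matrix_inv N *v b)) = (\<beta> 0)\<^sup>2"
    using beta_0_pos by (simp add: beta_0 sym_pos_def_mat_inverse[OF N_spd] inner_commute)
  then show ?thesis
    using beta_0_pos by (simp add: q_0 matrix_vector_mult_scaleR power2_eq_square)
qed

lemma q_Suc_normalized: "\<beta> (Suc j) > 0 \<Longrightarrow> q (Suc j) \<bullet> (N *v q (Suc j)) = 1"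
proof -
  assume pos: "\<beta> (Suc j) > 0"
  have "g j \<bullet> (N *v g j) = (\<beta> (Suc j))\<^sup>2"
    using beta_Suc[of j] sym_pos_def_imp_semidef[OF N_spd] by (simp add: sym_pos_semidef_mat_def)
  with pos show ?thesis
    by (simp add: q_Suc matrix_vector_mult_scaleR field_simps power2_eq_square)
qed

lemma d_S_q:
  assumes "orthonormal_upto S d n" "k \<le> n" "i \<le> n"
  shows "d k \<bullet> (S *v q i) = (if k = i then \<alpha> i else if Suc k = i then \<beta> i else 0)"
proof (cases i)
  case 0
  then show ?thesis
    using assms unfolding orthonormal_upto_def
    by (simp add: q_0_d matrix_vector_mult_scaleR)
next
  case (Suc i')
  then show ?thesis
    using assms unfolding orthonormal_upto_def
    by (auto simp: q_Suc_d matrix_vector_right_distrib matrix_vector_mult_scaleR inner_add_right)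
qed

lemma d_N_q_orthogonal:
  assumes "orthonormal_upto N q n" "i < k" "k \<le> n"
  shows "d i \<bullet> (N *v q k) = 0"
  using assms(2)
proof (induction i)
  case 0
  then show ?case using assms unfolding orthonormal_upto_def by (simp add: d_0)
next
  case (Suc i)
  then show ?case using assms unfolding orthonormal_upto_def by (simp add: d_Suc inner_diff_left)
qed

lemma orthonormal_q_Suc:
  assumes q: "orthonormal_upto N q j" and d: "orthonormal_upto S d j" and pos: "\<beta> (Suc j) > 0"
  shows "orthonormal_upto N q (Suc j)"
proof -
  have "\<beta> (Suc j) * (q (Suc j) \<bullet> (N *v q i)) = 0" if "i \<le> j" for i
  proof -
    have "d j \<bullet> (S *v q i) = q i \<bullet> (S *v d j)"
      by (rule inner_matrix_vector_commute[OF S_sym])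
    also have "\<dots> = \<beta> (Suc j) * (q (Suc j) \<bullet> (N *v q i)) + \<alpha> j * (q i \<bullet> (N *v q j))"
      by (simp add: S_d_eq matrix_vector_right_distrib matrix_vector_mult_scaleR inner_add_right
          inner_matrix_vector_commute[OF N_sym, of "q i"])
    finally have "\<beta> (Suc j) * (q (Suc j) \<bullet> (N *v q i)) = d j \<bullet> (S *v q i) - \<alpha> j * (q i \<bullet> (N *v q j))"
      by simp
    also have "\<dots> = 0"
      using d_S_q[OF d order.refl that] q that unfolding orthonormal_upto_def by auto
    finally show ?thesis .
  qed
  then show ?thesis
    using q pos q_Suc_normalized[OF pos] by (simp add: orthonormal_upto_Suc[OF N_sym])
qed

lemma orthonormal_d_Suc:
  assumes q: "orthonormal_upto N q (Suc j)" and d: "orthonormal_upto S d j"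
  shows "orthonormal_upto S d (Suc j)"
proof -
  have "r (Suc j) \<bullet> (N *v q (Suc j)) = 1"
    using q d_N_q_orthogonal[OF q, of j "Suc j"] unfolding orthonormal_upto_def
    by (simp add: r_Suc_d inner_diff_left)
  then have "r (Suc j) \<noteq> 0" by auto
  then have pos: "\<alpha> (Suc j) > 0"
    using S_spd by (simp add: alpha_eq sym_pos_def_mat_def)
  have "q (Suc j) \<bullet> (S *v d i) = (if i = j then \<beta> (Suc j) else 0)" if "i \<le> j" for i
    using q that unfolding S_d_eq orthonormal_upto_def
    by (auto simp: matrix_vector_right_distrib matrix_vector_mult_scaleR inner_add_right)
  then have "\<forall>i\<le>j. d (Suc j) \<bullet> (S *v d i) = 0"
    using d unfolding orthonormal_upto_def by (simp add: d_Suc inner_diff_left)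
  then show ?thesis
    using d d_normalized[OF pos] by (simp add: orthonormal_upto_Suc[OF S_sym])
qed

lemma orthonormal_q_d:
  assumes "\<And>i. 0 < i \<Longrightarrow> i \<le> n \<Longrightarrow> \<beta> i > 0"
  shows "orthonormal_upto N q n \<and> orthonormal_upto S d n"
  using assms
proof (induction n)
  case 0
  have "q 0 \<noteq> 0" using q_0_normalized by auto
  then have "\<alpha> 0 > 0"
    using S_spd by (simp add: alpha_eq r_0 sym_pos_def_mat_def)
  then show ?case
    using q_0_normalized d_normalized by (simp add: orthonormal_upto_0)
next
  case (Suc n)
  then show ?case using orthonormal_q_Suc orthonormal_d_Suc by simp
qed

lemma p_Suc_d: "p (Suc j) = p j - \<zeta> (Suc j) *\<^sub>R d (Suc j)"
  by (simp add: p_Suc d_def)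

lemma p_0_d: "p 0 = - (\<zeta> 0 *\<^sub>R d 0)"
  by (simp add: p_0 d_def)

lemma u_eq: "u j = - (matrix_inv M *v (A *v p j))"
  by (induction j) (simp_all add: u_0 u_Suc p_0_d p_Suc_d v_eq algebra_simps vec.neg)

lemma p_eq_sum: "j \<le> k \<Longrightarrow> p k = p j - (\<Sum>i = Suc j..k. \<zeta> i *\<^sub>R d i)"
proof (induction k)
  case (Suc k)
  then show ?case
    by (cases "j = Suc k") (simp_all add: p_Suc_d le_Suc_eq)
qed simp

end

locale craig_terminating = craig +
  fixes us ps and L :: nat
  assumes saddle_point_1: "M *v us + A *v ps = 0"
    and saddle_point_2: "transpose A *v us - C *v ps = b"
    and beta_pos: "\<And>i. 0 < i \<Longrightarrow> i \<le> L \<Longrightarrow> \<beta> i > 0"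
    and beta_stop: "\<beta> (Suc L) = 0"
begin

lemma us_eq: "us = - (matrix_inv M *v (A *v ps))"
proof -
  have "M *v us = - (A *v ps)" using saddle_point_1 by (simp add: eq_neg_iff_add_eq_0)
  then have "matrix_inv M *v (M *v us) = - (matrix_inv M *v (A *v ps))" by (simp add: vec.neg)
  then show ?thesis by (simp add: sym_pos_def_mat_inverse[OF M_spd])
qed

lemma S_ps: "S *v ps = - b"
proof -
  have "S *v ps = C *v ps - transpose A *v us"
    by (simp add: S_mult us_eq vec.neg del: transpose_matrix_vector)
  then show ?thesis using saddle_point_2 by (metis minus_diff_eq)
qed

lemma d_orthonormal: "orthonormal_upto S d L"
  using orthonormal_q_d[OF beta_pos] by blast

lemma alpha_pos: "j \<le> L \<Longrightarrow> \<alpha> j > 0"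
  using d_orthonormal by (intro alpha_pos_if_d_normalized) (simp add: orthonormal_upto_def)

lemma residual_eq: "j \<le> L \<Longrightarrow> S *v (ps - p j) = (\<zeta> j * \<beta> (Suc j)) *\<^sub>R (N *v q (Suc j))"
proof (induction j)
  case 0
  have "\<zeta> 0 * \<alpha> 0 = \<beta> 0" using alpha_pos[of 0] by (simp add: zeta_0)
  moreover have "N *v (\<beta> 0 *\<^sub>R q 0) = b"
    using beta_0_pos by (simp add: q_0 matrix_vector_mult_scaleR sym_pos_def_mat_inverse[OF N_spd])
  ultimately show ?case
    by (simp add: p_0_d S_ps S_d_eq matrix_vector_right_distrib matrix_vector_mult_scaleR
        vec.neg scaleR_add_right)
next
  case (Suc j)
  have "S *v (ps - p (Suc j)) = S *v (ps - p j) + \<zeta> (Suc j) *\<^sub>R (S *v d (Suc j))"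
    by (simp add: p_Suc_d algebra_simps)
  also have "\<dots> = (\<zeta> j * \<beta> (Suc j) + \<zeta> (Suc j) * \<alpha> (Suc j)) *\<^sub>R (N *v q (Suc j))
      + (\<zeta> (Suc j) * \<beta> (Suc (Suc j))) *\<^sub>R (N *v q (Suc (Suc j)))"
    using Suc by (simp add: S_d_eq matrix_vector_right_distrib matrix_vector_mult_scaleR
        scaleR_add_left scaleR_add_right)
  also have "\<zeta> j * \<beta> (Suc j) + \<zeta> (Suc j) * \<alpha> (Suc j) = 0"
    using alpha_pos[OF Suc.prems] by (simp add: zeta_Suc)
  finally show ?case by simp
qed

lemma p_L: "p L = ps"
  using residual_eq[of L] sym_pos_def_mat_inner_eq_0[OF S_spd, of "ps - p L"]
  by (simp add: beta_stop)

lemma error_S_norm: "j \<le> L \<Longrightarrow> (qnorm S (ps - p j))\<^sup>2 = (\<Sum>i = Suc j..L. (\<zeta> i)\<^sup>2)"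
proof -
  assume "j \<le> L"
  then have "ps - p j = - (\<Sum>i = Suc j..L. \<zeta> i *\<^sub>R d i)"
    using p_eq_sum[of j L] by (simp add: p_L)
  then show ?thesis
    using orthonormal_upto_quadratic_sum[OF d_orthonormal, of "{Suc j..L}" \<zeta>]
    by (simp add: qnorm_power2[OF sym_pos_def_imp_semidef[OF S_spd]] vec.neg)
qed

lemma error_M_norm_split:
  "(qnorm M (us - u j))\<^sup>2 + (ps - p j) \<bullet> (C *v (ps - p j)) = (qnorm S (ps - p j))\<^sup>2"
proof -
  have "us - u j = - (matrix_inv M *v (A *v (ps - p j)))"
    by (simp add: us_eq u_eq vec.neg vec.diff)
  then show ?thesis
    using qnorm_schur_complement_split[OF M_spd, of A "ps - p j" C, folded S_def]
    by (simp add: qnorm_power2 sym_pos_def_imp_semidef M_spd S_spd vec.neg)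
qed

lemma error_M_norm_le: "j \<le> L \<Longrightarrow> (qnorm M (us - u j))\<^sup>2 \<le> (\<Sum>i = Suc j..L. (\<zeta> i)\<^sup>2)"
proof -
  assume "j \<le> L"
  have "(ps - p j) \<bullet> (C *v (ps - p j)) \<ge> 0" using C_spsd sym_pos_semidef_mat_def by blast
  with \<open>j \<le> L\<close> show ?thesis using error_M_norm_split[of j] error_S_norm by simp
qed

lemma zeta_nonzero: "j \<le> L \<Longrightarrow> \<zeta> j \<noteq> 0"
proof (induction j)
  case 0
  then show ?case using beta_0_pos alpha_pos[of 0] by (simp add: zeta_0)
next
  case (Suc j)
  then show ?case using beta_pos[of "Suc j"] alpha_pos[of "Suc j"] by (simp add: zeta_Suc)
qed

lemma error_S_norm_decreasing: "Suc j \<le> L \<Longrightarrow> qnorm S (ps - p (Suc j)) < qnorm S (ps - p j)"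
proof -
  assume j: "Suc j \<le> L"
  have "(qnorm S (ps - p j))\<^sup>2 = (\<zeta> (Suc j))\<^sup>2 + (qnorm S (ps - p (Suc j)))\<^sup>2"
    using j by (simp add: error_S_norm sum.atLeast_Suc_atMost)
  moreover have "(\<zeta> (Suc j))\<^sup>2 > 0" using zeta_nonzero[OF j] by simp
  ultimately have "(qnorm S (ps - p (Suc j)))\<^sup>2 < (qnorm S (ps - p j))\<^sup>2" by linarith
  moreover have "qnorm S (ps - p j) \<ge> 0" by (simp add: qnorm_def S_nonneg)
  ultimately show ?thesis by (rule power2_less_imp_less)
qed

end

lemma all_pos_le_Suc_iff: "(\<forall>k. 1 \<le> k \<and> k \<le> Suc n \<longrightarrow> P k) \<longleftrightarrow> (\<forall>j\<le>n. P (Suc j))"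
  by (metis Suc_le_mono le_add1 not0_implies_Suc not_one_le_zero plus_1_eq_Suc)

lemma all_pos_less_Suc_iff:
  "(\<forall>k. 1 \<le> k \<and> k < Suc n \<longrightarrow> P k) \<longleftrightarrow> (\<forall>j. Suc j \<le> n \<longrightarrow> P (Suc j))"
  by (metis le_add1 not0_implies_Suc not_one_le_zero plus_1_eq_Suc less_Suc_eq_le)

theorem mainTheorem5:
  fixes M :: "real^'m^'m" and A :: "real^'n^'m" and C N :: "real^'n^'n"
    and b :: "real^'n" and us :: "real^'m" and ps :: "real^'n" and l :: nat
  assumes M_spd: "sym_pos_def_mat M"
    and A_rank: "rank A = CARD('n)"
    and C_spsd: "sym_pos_semidef_mat C"
    and b_nz: "b \<noteq> 0"
    and N_spd: "sym_pos_def_mat N"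
    and sol1: "M *v us + A *v ps = 0"
    and sol2: "transpose A *v us - C *v ps = b"
    and l_pos: "1 \<le> l"
    and beta_pos: "\<forall>k. 2 \<le> k \<and> k \<le> l \<longrightarrow> craig_beta M A C N b k > 0"
    and beta_stop: "craig_beta M A C N b (l + 1) = 0"
  shows "(\<forall>k. 1 \<le> k \<and> k \<le> l \<longrightarrow>
            (let S = transpose A ** matrix_inv M ** A + C;
                 eu = us - craig_u M A C N b k;
                 ep = ps - craig_p M A C N b k
             in (qnorm M eu)\<^sup>2 + ep \<bullet> (C *v ep) = (qnorm S ep)\<^sup>2
              \<and> (qnorm S ep)\<^sup>2 = (\<Sum>i = k + 1..l. (craig_zeta M A C N b i)\<^sup>2)
              \<and> (qnorm M eu)\<^sup>2 \<le> (\<Sum>i = k + 1..l. (craig_zeta M A C N b i)\<^sup>2)))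
       \<and> (\<forall>k. 1 \<le> k \<and> k < l \<longrightarrow>
            qnorm (transpose A ** matrix_inv M ** A + C) (ps - craig_p M A C N b (k + 1))
          < qnorm (transpose A ** matrix_inv M ** A + C) (ps - craig_p M A C N b k))"
proof -
  have A_inj: "inj ((*v) A)" using A_rank full_rank_injective by blast
  interpret craig M A C N b
    using M_spd A_inj C_spsd b_nz N_spd by unfold_locales
  have index_shift: "craig_beta M A C N b (Suc j) = \<beta> j" "craig_zeta M A C N b (Suc j) = \<zeta> j"
      "craig_u M A C N b (Suc j) = u j" "craig_p M A C N b (Suc j) = p j" for j
    by (simp_all add: craig_beta_def craig_zeta_def craig_u_def craig_p_def state_defs)
  obtain L where l: "l = Suc L" using l_pos by (cases l) auto
  interpret craig_terminating M A C N b us ps L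
  proof
    show "\<beta> i > 0" if "0 < i" "i \<le> L" for i
      using beta_pos[rule_format, of "Suc i"] that by (simp add: index_shift l)
    show "\<beta> (Suc L) = 0" using beta_stop by (simp add: l flip: index_shift)
  qed (fact sol1 sol2)+
  show ?thesis
    unfolding l all_pos_le_Suc_iff all_pos_less_Suc_iff Let_def S_def[symmetric]
      Suc_eq_plus1[symmetric] sum.shift_bounds_cl_Suc_ivl index_shift
    using error_M_norm_split error_S_norm error_M_norm_le error_S_norm_decreasing by simp
qed

end
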